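(* Let $p$ be a prime. If $B\subset\mathbf{Z}/p\mathbf{Z}$ is balanced, then $|B|\geqslant\log_2 p+1$.
   Context: A subset $B$ of an abelian group is balanced if for every $b\in B$ there exist distinct $b_1,b_2\in B$ with $2b=b_1+b_2$. *)

theory Defs
  imports Complex_Main "HOL-Computational_Algebra.Primes"
begin

text \<open>Z/pZ is represented by the canonical residues {0..<p} of int, with the group
  operation being addition modulo p. A subset B of Z/pZ is balanced if for every
  b in B there are distinct b1, b2 in B with 2b = b1 + b2 in Z/pZ.\<close>

definition balanced_mod :: "int \<Rightarrow> int set \<Rightarrow> bool" where
  "balanced_mod p B \<longleftrightarrow>
     (\<forall>b\<in>B. \<exists>b1\<in>B. \<exists>b2\<in>B. b1 \<noteq> b2 \<and> (2 * b) mod p = (b1 + b2) mod p)"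

end

theory Submission
  imports Defs "HOL-Number_Theory.Cong"
begin

text \<open>Pick for every b in B elements c1 b, c2 b of B with c1 b + c2 b = 2b mod p and
  c1 b different from b. In the digraph b -> c1 b, c2 b choose a vertex r from which every
  reachable vertex leads back to r; on the set V reachable from r the distance to r yields a
  potential h >= 0 with h (c1 v) + h (c2 v) < 2 h v for all v in V other than r.
  Now play a chip-firing game on V: firing v moves two chips from v to c1 v and c2 v. This
  keeps the sum of (v - r) over all chips fixed mod p and, for v other than r, lowers the
  total potential, so every configuration can be reduced to one with at most one chip on each
  vertex other than r. Starting with k chips on u = c1 r shows that every multiple of u - r,
  hence every residue mod p, is a sum of a subset of {v - r | v in B - {r}}.
  Therefore p <= 2 ^ (card B - 1).\<close>

definition fire :: "('v \<Rightarrow> 'v) \<Rightarrow> ('v \<Rightarrow> 'v) \<Rightarrow> 'v \<Rightarrow> ('v \<Rightarrow> int) \<Rightarrow> 'v \<Rightarrow> int" where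
  "fire c1 c2 v z w = z w - 2 * of_bool (w = v) + of_bool (w = c1 v) + of_bool (w = c2 v)"

lemma sum_fire:
  fixes f :: "'v \<Rightarrow> int"
  assumes "finite V" "v \<in> V" "c1 v \<in> V" "c2 v \<in> V"
  shows "(\<Sum>w\<in>V. fire c1 c2 v z w * f w) = (\<Sum>w\<in>V. z w * f w) - 2 * f v + f (c1 v) + f (c2 v)"
  using assms by (simp add: fire_def ring_distribs sum.distrib sum_subtractf of_bool_def mult.assoc
      if_distrib[of "\<lambda>t. t * _"] sum.delta' flip: sum_distrib_left)

lemma fire_nonneg:
  assumes "\<forall>w. 0 \<le> z w" "2 \<le> z v"
  shows "0 \<le> fire c1 c2 v z w"
  using assms by (cases "w = v") (auto simp: fire_def add_nonneg_nonneg)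

lemma exists_stable_configuration:
  fixes V :: "'v set" and x h z :: "'v \<Rightarrow> int"
  assumes fin: "finite V"
    and succ: "\<forall>v\<in>V-{r}. c1 v \<in> V \<and> c2 v \<in> V"
    and h_nonneg: "\<forall>v\<in>V. 0 \<le> h v"
    and h_strict: "\<forall>v\<in>V-{r}. h (c1 v) + h (c2 v) < 2 * h v"
    and x_cong: "\<forall>v\<in>V-{r}. [x (c1 v) + x (c2 v) = 2 * x v] (mod p)"
    and z_nonneg: "\<forall>w. 0 \<le> z w"
  shows "\<exists>y. (\<forall>w. 0 \<le> y w) \<and> (\<forall>v\<in>V-{r}. y v \<le> 1)
           \<and> [(\<Sum>w\<in>V. y w * x w) = (\<Sum>w\<in>V. z w * x w)] (mod p)"
proof -
  define P where "P y \<longleftrightarrow> (\<forall>w. 0 \<le> y w) \<and> [(\<Sum>w\<in>V. y w * x w) = (\<Sum>w\<in>V. z w * x w)] (mod p)"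
    for y
  define energy where "energy y = nat (\<Sum>w\<in>V. y w * h w)" for y
  obtain y where Py: "P y" and y_min: "\<And>y'. P y' \<Longrightarrow> energy y \<le> energy y'"
    using ex_has_least_nat[of P z energy] z_nonneg by (auto simp: P_def)
  have "y v \<le> 1" if v: "v \<in> V - {r}" for v
  proof (rule ccontr)
    assume "\<not> y v \<le> 1"
    then have fired_nonneg: "\<forall>w. 0 \<le> fire c1 c2 v y w"
      using Py fire_nonneg[of y v] by (simp add: P_def)
    have in_V: "v \<in> V" "c1 v \<in> V" "c2 v \<in> V"
      using v succ by auto
    have "[(\<Sum>w\<in>V. fire c1 c2 v y w * x w) = (\<Sum>w\<in>V. y w * x w)] (mod p)"
      using x_cong v unfolding sum_fire[of V v c1 c2, OF fin in_V] cong_iff_dvd_diff by auto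
    with fired_nonneg Py have P_fire: "P (fire c1 c2 v y)"
      unfolding P_def using cong_trans by blast
    have "0 \<le> (\<Sum>w\<in>V. fire c1 c2 v y w * h w)"
      using fired_nonneg h_nonneg by (intro sum_nonneg) auto
    moreover have "h (c1 v) + h (c2 v) < 2 * h v"
      using h_strict v by blast
    ultimately have "energy (fire c1 c2 v y) < energy y"
      unfolding energy_def sum_fire[of V v c1 c2, OF fin in_V] by linarith
    with y_min[OF P_fire] show False
      by simp
  qed
  with Py show ?thesis
    unfolding P_def by blast
qed

lemma chip_firing_subset_sum:
  fixes V :: "'v set" and x h z :: "'v \<Rightarrow> int"
  assumes "finite V"
    and "\<forall>v\<in>V-{r}. c1 v \<in> V \<and> c2 v \<in> V"
    and "\<forall>v\<in>V. 0 \<le> h v"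
    and "\<forall>v\<in>V-{r}. h (c1 v) + h (c2 v) < 2 * h v"
    and "\<forall>v\<in>V-{r}. [x (c1 v) + x (c2 v) = 2 * x v] (mod p)"
    and "\<forall>w. 0 \<le> z w"
    and x_root: "x r = 0"
  shows "\<exists>S\<subseteq>V-{r}. [sum x S = (\<Sum>w\<in>V. z w * x w)] (mod p)"
proof -
  obtain y where y_nonneg: "\<forall>w. 0 \<le> y w" and y_stable: "\<forall>v\<in>V-{r}. y v \<le> 1"
    and y_cong: "[(\<Sum>w\<in>V. y w * x w) = (\<Sum>w\<in>V. z w * x w)] (mod p)"
    using exists_stable_configuration[OF assms(1-6)] by blast
  have "(\<Sum>w\<in>V. y w * x w) = (\<Sum>w\<in>V-{r}. y w * x w)"
    using \<open>finite V\<close> x_root by (intro sum.mono_neutral_right) auto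
  also have "\<dots> = (\<Sum>w\<in>V-{r}. if y w = 1 then x w else 0)"
  proof (intro sum.cong)
    fix w assume "w \<in> V - {r}"
    then have "0 \<le> y w" "y w \<le> 1"
      using y_nonneg y_stable by auto
    then have "y w = 0 \<or> y w = 1"
      by linarith
    then show "y w * x w = (if y w = 1 then x w else 0)"
      by auto
  qed simp
  also have "\<dots> = sum x {v\<in>V-{r}. y v = 1}"
    using \<open>finite V\<close> by (intro sum.inter_filter[symmetric]) auto
  finally show ?thesis
    using y_cong by (intro exI[of _ "{v\<in>V-{r}. y v = 1}"]) auto
qed

lemma exists_potential_of_rank:
  fixes V :: "'v set" and d :: "'v \<Rightarrow> nat"
  assumes "finite V"
  shows "\<exists>h :: 'v \<Rightarrow> int. (\<forall>v\<in>V. 0 \<le> h v)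
           \<and> (\<forall>a\<in>V. \<forall>b\<in>V. \<forall>v\<in>V. d a < d v \<longrightarrow> h a + h b < 2 * h v)"
proof -
  define N where "N = Max (d ` V)"
  have d_le: "d v \<le> N" if "v \<in> V" for v
    unfolding N_def using assms that by simp
  \<comment> \<open>Lowering the rank at least doubles the gap to \<open>2 ^ N\<close>, which outweighs any second summand.\<close>
  define h :: "'v \<Rightarrow> int" where "h v = 2 ^ N - 2 ^ (N - d v)" for v
  have "h a + h b < 2 * h v" if "a \<in> V" "b \<in> V" "v \<in> V" "d a < d v" for a b v
  proof -
    have "(2::int) * 2 ^ (N - d v) \<le> 2 ^ (N - d a)"
      using that d_le[of v] power_increasing[of "Suc (N - d v)" "N - d a" "2::int"] by simp
    moreover have "(1::int) \<le> 2 ^ (N - d b)"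
      by simp
    ultimately show ?thesis
      unfolding h_def right_diff_distrib by linarith
  qed
  moreover have "0 \<le> h v" if "v \<in> V" for v
    unfolding h_def using d_le[OF that] by (simp add: power_increasing)
  ultimately show ?thesis
    by blast
qed

lemma exists_descending_rank:
  "\<exists>d :: 'v \<Rightarrow> nat. \<forall>v. (v, r) \<in> E\<^sup>* \<and> v \<noteq> r \<longrightarrow> (\<exists>w. (v, w) \<in> E \<and> d w < d v)"
proof -
  define d where "d v = (LEAST n. (v, r) \<in> E ^^ n)" for v
  have "\<exists>w. (v, w) \<in> E \<and> d w < d v" if "(v, r) \<in> E\<^sup>*" "v \<noteq> r" for v
  proof -
    have "(v, r) \<in> E ^^ d v"
      using that(1) unfolding d_def rtrancl_power by (auto intro: LeastI)
    moreover have "d v \<noteq> 0"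
      using calculation that(2) by (metis relpow_0_E)
    ultimately obtain m w where "d v = Suc m" "(v, w) \<in> E" "(w, r) \<in> E ^^ m"
      by (metis not0_implies_Suc relpow_Suc_D2)
    moreover have "d w \<le> m"
      unfolding d_def using calculation(3) by (rule Least_le)
    ultimately show ?thesis
      by auto
  qed
  then show ?thesis
    by blast
qed

lemma finite_exists_recurrent_vertex:
  assumes "finite B" "B \<noteq> {}" "E \<subseteq> B \<times> B"
  shows "\<exists>r\<in>B. \<forall>v. (r, v) \<in> E\<^sup>* \<longrightarrow> (v, r) \<in> E\<^sup>*"
proof -
  have B_closed: "E\<^sup>* `` B = B"
    using assms(3) by (intro Image_closed_trancl) blast
  obtain r where r: "r \<in> B"
    and r_min: "\<And>v. v \<in> B \<Longrightarrow> card (E\<^sup>* `` {r}) \<le> card (E\<^sup>* `` {v})"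
    using ex_has_least_nat[of "\<lambda>v. v \<in> B" _ "\<lambda>v. card (E\<^sup>* `` {v})"] assms(2) by blast
  have "(v, r) \<in> E\<^sup>*" if v: "(r, v) \<in> E\<^sup>*" for v
  proof -
    have "v \<in> B"
      using v r B_closed by blast
    have "E\<^sup>* `` {v} \<subseteq> E\<^sup>* `` {r}"
      using v by (blast intro: rtrancl_trans)
    moreover have "E\<^sup>* `` {r} \<subseteq> B"
      using B_closed r by blast
    ultimately have "E\<^sup>* `` {v} = E\<^sup>* `` {r}"
      using r_min[OF \<open>v \<in> B\<close>] finite_subset[OF _ assms(1)] by (simp add: card_seteq)
    then show ?thesis
      by blast
  qed
  with r show ?thesis
    by blast
qed

lemma exists_closed_subset_with_potential:
  fixes B :: "'v set" and c1 c2 :: "'v \<Rightarrow> 'v"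
  assumes "finite B" "B \<noteq> {}" "\<forall>b\<in>B. c1 b \<in> B \<and> c2 b \<in> B"
  shows "\<exists>V\<subseteq>B. \<exists>r\<in>V. (\<forall>v\<in>V. c1 v \<in> V \<and> c2 v \<in> V)
           \<and> (\<exists>h :: 'v \<Rightarrow> int. (\<forall>v\<in>V. 0 \<le> h v) \<and> (\<forall>v\<in>V-{r}. h (c1 v) + h (c2 v) < 2 * h v))"
proof -
  define E where "E = {(v, w). v \<in> B \<and> (w = c1 v \<or> w = c2 v)}"
  have E_sub: "E \<subseteq> B \<times> B"
    using assms(3) by (auto simp: E_def)
  then obtain r where r: "r \<in> B" and recurrent: "\<And>v. (r, v) \<in> E\<^sup>* \<Longrightarrow> (v, r) \<in> E\<^sup>*"
    using finite_exists_recurrent_vertex[OF assms(1,2)] by blast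
  define V where "V = E\<^sup>* `` {r}"
  have "E\<^sup>* `` B = B"
    using E_sub by (intro Image_closed_trancl) blast
  then have V_sub: "V \<subseteq> B"
    unfolding V_def using r by blast
  have V_closed: "c1 v \<in> V \<and> c2 v \<in> V" if "v \<in> V" for v
  proof -
    have "(v, c1 v) \<in> E" "(v, c2 v) \<in> E"
      using that V_sub unfolding E_def by auto
    with that show ?thesis
      unfolding V_def by (blast intro: rtrancl_into_rtrancl)
  qed
  obtain d :: "'v \<Rightarrow> nat"
    where d: "\<forall>v. (v, r) \<in> E\<^sup>* \<and> v \<noteq> r \<longrightarrow> (\<exists>w. (v, w) \<in> E \<and> d w < d v)"
    using exists_descending_rank[of r E] by auto
  obtain h :: "'v \<Rightarrow> int" where h_nonneg: "\<forall>v\<in>V. 0 \<le> h v"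
    and h_rank: "\<And>a b v. a \<in> V \<Longrightarrow> b \<in> V \<Longrightarrow> v \<in> V \<Longrightarrow> d a < d v \<Longrightarrow> h a + h b < 2 * h v"
    using exists_potential_of_rank[OF finite_subset[OF V_sub assms(1)], of d] by blast
  have "h (c1 v) + h (c2 v) < 2 * h v" if v: "v \<in> V - {r}" for v
  proof -
    have "(v, r) \<in> E\<^sup>*"
      using v recurrent unfolding V_def by blast
    then obtain w where "(v, w) \<in> E" "d w < d v"
      using d v by auto
    then have "d (c1 v) < d v \<or> d (c2 v) < d v"
      unfolding E_def by blast
    moreover have in_V: "c1 v \<in> V" "c2 v \<in> V" "v \<in> V"
      using V_closed v by auto
    ultimately show ?thesis
      using h_rank[OF in_V] h_rank[OF in_V(2,1,3)] by (auto simp: add.commute)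
  qed
  moreover have "r \<in> V"
    unfolding V_def by blast
  ultimately show ?thesis
    using V_sub V_closed h_nonneg by (intro exI[of _ V] conjI bexI[of _ r] exI[of _ h]) auto
qed

lemma card_bound_of_subset_sums_mod:
  fixes x :: "'v \<Rightarrow> int" and p :: int
  assumes "finite A" "0 < p" "\<forall>g. \<exists>S\<subseteq>A. [sum x S = g] (mod p)"
  shows "p \<le> 2 ^ card A"
proof -
  have "{0..<p} \<subseteq> (\<lambda>S. sum x S mod p) ` Pow A"
  proof
    fix g assume "g \<in> {0..<p}"
    moreover obtain S where "S \<subseteq> A" "[sum x S = g] (mod p)"
      using assms(3) by blast
    ultimately show "g \<in> (\<lambda>S. sum x S mod p) ` Pow A"
      unfolding cong_def by force
  qed
  then have "card {0..<p} \<le> card (Pow A)"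
    using assms(1) by (meson card_image_le card_mono finite_Pow_iff finite_imageI le_trans)
  then show ?thesis
    using assms(1,2) by (simp add: card_Pow)
qed

lemma balanced_mod_successors:
  fixes p :: int and B :: "int set"
  assumes "balanced_mod p B" "B \<subseteq> {0..<p}"
  shows "\<exists>c1 c2. \<forall>b\<in>B. c1 b \<in> B \<and> c2 b \<in> B \<and> c1 b \<noteq> b \<and> [c1 b + c2 b = 2 * b] (mod p)"
proof -
  have summands: "\<forall>b\<in>B. \<exists>b1. b1 \<in> B \<and> b1 \<noteq> b \<and> (\<exists>b2. b2 \<in> B \<and> [b1 + b2 = 2 * b] (mod p))"
  proof
    fix b assume b: "b \<in> B"
    obtain b1 b2 where b12: "b1 \<in> B" "b2 \<in> B" "b1 \<noteq> b2" "[b1 + b2 = 2 * b] (mod p)"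
      using assms(1) b unfolding balanced_mod_def cong_def by metis
    have "b1 \<noteq> b"
    proof
      assume "b1 = b"
      then have "[b2 = b] (mod p)"
        using b12(4) by (simp add: cong_iff_dvd_diff algebra_simps)
      moreover have "b \<in> {0..<p}" "b2 \<in> {0..<p}"
        using b b12(2) assms(2) by auto
      ultimately have "b2 = b"
        by (auto intro: cong_less_imp_eq_int)
      with \<open>b1 = b\<close> b12(3) show False
        by simp
    qed
    with b12 show "\<exists>b1. b1 \<in> B \<and> b1 \<noteq> b \<and> (\<exists>b2. b2 \<in> B \<and> [b1 + b2 = 2 * b] (mod p))"
      by auto
  qed
  obtain c1 where c1: "\<forall>b\<in>B. c1 b \<in> B \<and> c1 b \<noteq> b \<and> (\<exists>b2. b2 \<in> B \<and> [c1 b + b2 = 2 * b] (mod p))"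
    using bchoice[OF summands] by auto
  then obtain c2 where "\<forall>b\<in>B. c2 b \<in> B \<and> [c1 b + c2 b = 2 * b] (mod p)"
    using bchoice[of B "\<lambda>b b2. b2 \<in> B \<and> [c1 b + b2 = 2 * b] (mod p)"] by auto
  with c1 show ?thesis
    by (intro exI[of _ c1] exI[of _ c2]) auto
qed

lemma subset_sums_cover_multiples:
  fixes p :: int and B :: "int set"
  assumes "finite B" "B \<noteq> {}"
    and succ: "\<forall>b\<in>B. c1 b \<in> B \<and> c2 b \<in> B \<and> c1 b \<noteq> b \<and> [c1 b + c2 b = 2 * b] (mod p)"
  shows "\<exists>r\<in>B. \<exists>u\<in>B. u \<noteq> r \<and> (\<forall>k\<ge>0. \<exists>S\<subseteq>B-{r}. [(\<Sum>v\<in>S. v - r) = k * (u - r)] (mod p))"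
proof -
  have "\<forall>b\<in>B. c1 b \<in> B \<and> c2 b \<in> B"
    using succ by blast
  then obtain V r and h :: "int \<Rightarrow> int" where V_sub: "V \<subseteq> B" and r: "r \<in> V"
    and V_closed: "\<forall>v\<in>V. c1 v \<in> V \<and> c2 v \<in> V"
    and h_nonneg: "\<forall>v\<in>V. 0 \<le> h v" and h_strict: "\<forall>v\<in>V-{r}. h (c1 v) + h (c2 v) < 2 * h v"
    using exists_closed_subset_with_potential[OF assms(1,2)] by metis
  have fin: "finite V"
    using V_sub assms(1) by (rule finite_subset)
  have succ_V: "\<forall>v\<in>V-{r}. c1 v \<in> V \<and> c2 v \<in> V"
    using V_closed by blast
  have x_cong: "\<forall>v\<in>V-{r}. [(c1 v - r) + (c2 v - r) = 2 * (v - r)] (mod p)"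
    using succ V_sub by (auto simp: cong_iff_dvd_diff algebra_simps)
  have "\<exists>S\<subseteq>B-{r}. [(\<Sum>v\<in>S. v - r) = k * (c1 r - r)] (mod p)" if k: "0 \<le> k" for k
  proof -
    define z where "z w = (if w = c1 r then k else 0)" for w
    have "(\<Sum>w\<in>V. z w * (w - r)) = k * (c1 r - r)"
      using fin V_closed r by (simp add: z_def if_distrib[of "\<lambda>t. t * _"] sum.delta' cong: if_cong)
    moreover have "\<forall>w. 0 \<le> z w"
      using k by (simp add: z_def)
    then obtain S where "S \<subseteq> V - {r}" "[(\<Sum>v\<in>S. v - r) = (\<Sum>w\<in>V. z w * (w - r))] (mod p)"
      using chip_firing_subset_sum[OF fin succ_V h_nonneg h_strict x_cong _ diff_self] by blast
    ultimately show ?thesis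
      using V_sub by auto
  qed
  moreover have "c1 r \<in> B" "c1 r \<noteq> r"
    using succ V_sub r by auto
  ultimately show ?thesis
    using V_sub r by auto
qed

lemma balanced_mod_prime_le_power:
  fixes p :: int and B :: "int set"
  assumes "prime p" "B \<subseteq> {0..<p}" "B \<noteq> {}" "balanced_mod p B"
  shows "p \<le> 2 ^ (card B - 1)"
proof -
  have fin: "finite B"
    using assms(2) finite_subset by blast
  obtain c1 c2 where succ: "\<forall>b\<in>B. c1 b \<in> B \<and> c2 b \<in> B \<and> c1 b \<noteq> b \<and> [c1 b + c2 b = 2 * b] (mod p)"
    using balanced_mod_successors[OF assms(4,2)] by auto
  obtain r u where r: "r \<in> B" and u: "u \<in> B" "u \<noteq> r"
    and multiples: "\<And>k. 0 \<le> k \<Longrightarrow> \<exists>S\<subseteq>B-{r}. [(\<Sum>v\<in>S. v - r) = k * (u - r)] (mod p)"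
    using subset_sums_cover_multiples[OF fin assms(3) succ] by auto
  have "u \<in> {0..<p}" "r \<in> {0..<p}"
    using r u assms(2) by auto
  then have "[u \<noteq> r] (mod p)"
    using u(2) by (auto dest: cong_less_imp_eq_int)
  then have "coprime (u - r) p"
    using assms(1) by (simp add: cong_iff_dvd_diff prime_imp_coprime coprime_commute)
  then obtain s where s: "[(u - r) * s = 1] (mod p)"
    using cong_solve_coprime_int by blast
  have "\<forall>g. \<exists>S\<subseteq>B-{r}. [(\<Sum>v\<in>S. v - r) = g] (mod p)"
  proof
    fix g
    have "[(s * g) mod p * (u - r) = s * g * (u - r)] (mod p)"
      by (intro cong_scalar_right) simp
    also have "s * g * (u - r) = (u - r) * s * g"
      by (simp add: mult_ac)
    also have "[(u - r) * s * g = 1 * g] (mod p)"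
      using s by (rule cong_scalar_right)
    finally have "[(s * g) mod p * (u - r) = g] (mod p)"
      by simp
    moreover have "0 \<le> (s * g) mod p"
      using assms(1) by (simp add: prime_gt_0_int)
    ultimately show "\<exists>S\<subseteq>B-{r}. [(\<Sum>v\<in>S. v - r) = g] (mod p)"
      using multiples by (meson cong_trans)
  qed
  moreover have "0 < p"
    using assms(1) by (rule prime_gt_0_int)
  ultimately have "p \<le> 2 ^ card (B - {r})"
    using fin by (intro card_bound_of_subset_sums_mod) auto
  with fin r show ?thesis
    by simp
qed

theorem corollary4p4:
  fixes p :: int and B :: "int set"
  assumes "prime p"
    and "B \<subseteq> {0..<p}"
    and "B \<noteq> {}"
    and "balanced_mod p B"
  shows "real (card B) \<ge> log 2 (real_of_int p) + 1"
proof -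
  have "card B \<ge> 1"
    using assms(2,3) by (simp add: Suc_le_eq card_gt_0_iff finite_subset)
  have "real_of_int p \<le> 2 ^ (card B - 1)"
    using balanced_mod_prime_le_power[OF assms] by (metis of_int_le_iff of_int_numeral of_int_power)
  then have "log 2 (real_of_int p) \<le> real (card B - 1)"
    using prime_gt_0_int[OF assms(1)] by (simp add: log_le_iff powr_realpow)
  with \<open>card B \<ge> 1\<close> show ?thesis
    by linarith
qed

end
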